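(* Let $k\le n$ be positive integers, $m=\binom nk$, let $\mu$ be an absolute operator norm on $\mathbb{C}^{m\times m}$, and let $p$ and $r$ be positive integers. Then $$\theta_k(\mu,\ell_p)\le n^{\left[\frac{k}{r}-\frac{k}{p}\right]^+}\theta_k(\mu,\ell_r),$$ where $[x]^+=\max\{x,0\}$.
   Context: $C_k(B)$ is the $k$th compound of $B\in\mathbb{C}^{n\times n}$ (the $\binom nk\times\binom nk$ matrix of $k\times k$ minors). For a vector norm $\nu$ on $\mathbb{C}^n$ and a norm $\mu$ on $\mathbb{C}^{m\times m}$, $\theta_k(\mu,\nu)=\max\{\mu(C_k(B)): B\in\mathbb{C}^{n\times n},\ \nu(\mathrm{col}_i(B))=1,\ i=1,\ldots,n\}$, where $\mathrm{col}_i(B)$ is the $i$th column. $\ell_p$ denotes the vector $p$-norm. An absolute operator norm is a matrix norm induced by an absolute vector norm. *)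

theory Defs
  imports "HOL-Analysis.Analysis"
begin

definition vecs :: "'i set \<Rightarrow> ('i \<Rightarrow> complex) set" where
  "vecs I = {x. \<forall>i. i \<notin> I \<longrightarrow> x i = 0}"

definition is_vnorm :: "'i set \<Rightarrow> (('i \<Rightarrow> complex) \<Rightarrow> real) \<Rightarrow> bool" where
  "is_vnorm I N \<longleftrightarrow>
     (\<forall>x\<in>vecs I. 0 \<le> N x \<and> (N x = 0 \<longleftrightarrow> x = (\<lambda>_. 0))) \<and>
     (\<forall>x\<in>vecs I. \<forall>c::complex. N (\<lambda>i. c * x i) = cmod c * N x) \<and>
     (\<forall>x\<in>vecs I. \<forall>y\<in>vecs I. N (\<lambda>i. x i + y i) \<le> N x + N y)"

definition is_absolute_vnorm :: "'i set \<Rightarrow> (('i \<Rightarrow> complex) \<Rightarrow> real) \<Rightarrow> bool" where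
  "is_absolute_vnorm I N \<longleftrightarrow> is_vnorm I N \<and>
     (\<forall>x\<in>vecs I. \<forall>y\<in>vecs I. (\<forall>i. cmod (x i) = cmod (y i)) \<longrightarrow> N x = N y)"

definition matvec :: "'i set \<Rightarrow> ('i \<Rightarrow> 'i \<Rightarrow> complex) \<Rightarrow> ('i \<Rightarrow> complex) \<Rightarrow> ('i \<Rightarrow> complex)" where
  "matvec I A x = (\<lambda>i. if i \<in> I then (\<Sum>j\<in>I. A i j * x j) else 0)"

definition opnorm :: "'i set \<Rightarrow> (('i \<Rightarrow> complex) \<Rightarrow> real) \<Rightarrow> ('i \<Rightarrow> 'i \<Rightarrow> complex) \<Rightarrow> real" where
  "opnorm I N A = Sup {N (matvec I A x) / N x | x. x \<in> vecs I \<and> x \<noteq> (\<lambda>_. 0)}"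

definition lp_norm :: "nat \<Rightarrow> real \<Rightarrow> (nat \<Rightarrow> complex) \<Rightarrow> real" where
  "lp_norm n p x = (\<Sum>i<n. cmod (x i) powr p) powr (1 / p)"

text \<open>The k-subsets of {0..<n}; they index the rows/columns of the k-th compound
  (m = n choose k of them).\<close>
definition ksubsets :: "nat \<Rightarrow> nat \<Rightarrow> nat set set" where
  "ksubsets n k = {A. A \<subseteq> {..<n} \<and> card A = k}"

definition minor :: "nat \<Rightarrow> (nat \<Rightarrow> nat \<Rightarrow> complex) \<Rightarrow> nat set \<Rightarrow> nat set \<Rightarrow> complex" where
  "minor k B A S = (\<Sum>\<sigma> | \<sigma> permutes {..<k}. of_int (sign \<sigma>) *
      (\<Prod>i<k. B (sorted_list_of_set A ! i) (sorted_list_of_set S ! \<sigma> i)))"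

definition compound :: "nat \<Rightarrow> (nat \<Rightarrow> nat \<Rightarrow> complex) \<Rightarrow> nat set \<Rightarrow> nat set \<Rightarrow> complex" where
  "compound k B = (\<lambda>A S. minor k B A S)"

definition col :: "nat \<Rightarrow> (nat \<Rightarrow> nat \<Rightarrow> complex) \<Rightarrow> nat \<Rightarrow> (nat \<Rightarrow> complex)" where
  "col n B i = (\<lambda>r. if r < n then B r i else 0)"

text \<open>theta_k(mu, nu) for n \<times> n matrices (max realized as Sup; the set is compact).\<close>
definition theta :: "nat \<Rightarrow> nat \<Rightarrow> ((nat set \<Rightarrow> nat set \<Rightarrow> complex) \<Rightarrow> real)
                      \<Rightarrow> ((nat \<Rightarrow> complex) \<Rightarrow> real) \<Rightarrow> real" where
  "theta n k \<mu> \<nu> = Sup {\<mu> (compound k B) | B. (\<forall>i<n. \<nu> (col n B i) = 1)}"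

end

theory Submission
  imports Defs
begin

text \<open>Write \<open>B = B' diag d\<close> with \<open>d j\<close> the \<open>\<ell>\<^sub>r\<close>-norm of the \<open>j\<close>-th column of \<open>B\<close>, so that
  the columns of \<open>B'\<close> are \<open>\<ell>\<^sub>r\<close>-unit vectors; when the columns of \<open>B\<close> are \<open>\<ell>\<^sub>p\<close>-unit vectors,
  the power mean inequality gives \<open>d j \<le> n powr [1/r - 1/p]\<^sup>+\<close>. Scaling columns multiplies the
  minor with column set \<open>S\<close> by the product of the \<open>d j\<close> over \<open>S\<close>, so \<open>C\<^sub>k(B) = C\<^sub>k(B') diag u\<close> with
  \<open>|u S| \<le> n powr (k [1/r - 1/p]\<^sup>+)\<close>. An absolute vector norm is monotone in the moduli of the
  entries, so the induced norm satisfies \<open>\<mu>(A diag u) \<le> max |u S| \<mu>(A)\<close>; taking suprema gives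
  the bound.\<close>

lemma vecs_mult [intro]: "x \<in> vecs I \<Longrightarrow> (\<lambda>i. u i * x i) \<in> vecs I"
  unfolding vecs_def by auto

lemma vecs_add [intro]: "x \<in> vecs I \<Longrightarrow> y \<in> vecs I \<Longrightarrow> (\<lambda>i. x i + y i) \<in> vecs I"
  unfolding vecs_def by auto

lemma vecs_sum [intro]: "(\<And>j. j \<in> J \<Longrightarrow> f j \<in> vecs I) \<Longrightarrow> (\<lambda>i. \<Sum>j\<in>J. f j i) \<in> vecs I"
  unfolding vecs_def by (auto intro: sum.neutral)

lemma basis_vector_vecs:
  assumes "i \<in> I"
  shows "(\<lambda>j. if j = i then 1 else 0 :: complex) \<in> vecs I" "(\<lambda>j. if j = i then 1 else 0 :: complex) \<noteq> (\<lambda>_. 0)"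
  using assms unfolding vecs_def by (auto dest: fun_cong[where x = i])

lemma absolute_vnorm_imp_vnorm: "is_absolute_vnorm I N \<Longrightarrow> is_vnorm I N"
  unfolding is_absolute_vnorm_def by blast

lemma vnorm_zero: "is_vnorm I N \<Longrightarrow> N (\<lambda>_. 0) = 0"
  unfolding is_vnorm_def vecs_def by auto

lemma vnorm_nonneg: "is_vnorm I N \<Longrightarrow> x \<in> vecs I \<Longrightarrow> 0 \<le> N x"
  unfolding is_vnorm_def by auto

lemma vnorm_pos: "is_vnorm I N \<Longrightarrow> x \<in> vecs I \<Longrightarrow> x \<noteq> (\<lambda>_. 0) \<Longrightarrow> 0 < N x"
  unfolding is_vnorm_def by (metis order_le_less)

lemma vnorm_scale: "is_vnorm I N \<Longrightarrow> x \<in> vecs I \<Longrightarrow> N (\<lambda>i. c * x i) = cmod c * N x"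
  unfolding is_vnorm_def by auto

lemma vnorm_triangle:
  "is_vnorm I N \<Longrightarrow> x \<in> vecs I \<Longrightarrow> y \<in> vecs I \<Longrightarrow> N (\<lambda>i. x i + y i) \<le> N x + N y"
  unfolding is_vnorm_def by auto

lemma vnorm_sum_le:
  assumes "is_vnorm I N" "finite J" "\<And>j. j \<in> J \<Longrightarrow> f j \<in> vecs I"
  shows "N (\<lambda>i. \<Sum>j\<in>J. f j i) \<le> (\<Sum>j\<in>J. N (f j))"
  using assms(2,3)
proof (induction J rule: finite_induct)
  case empty
  then show ?case using vnorm_zero[OF assms(1)] by simp
next
  case (insert a J)
  have "N (\<lambda>i. \<Sum>j\<in>insert a J. f j i) = N (\<lambda>i. f a i + (\<Sum>j\<in>J. f j i))"
    using insert.hyps by simp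
  also have "\<dots> \<le> N (f a) + N (\<lambda>i. \<Sum>j\<in>J. f j i)"
    using vnorm_triangle[OF assms(1), of "f a"] insert.prems by auto
  also have "\<dots> \<le> N (f a) + (\<Sum>j\<in>J. N (f j))"
    using insert by simp
  finally show ?case using insert.hyps by simp
qed

lemma complex_midpoint_of_norm_eq:
  fixes u :: complex
  assumes "cmod u \<le> M"
  obtains w1 w2 where "cmod w1 = M" "cmod w2 = M" "u = (w1 + w2) / 2"
proof -
  define s where "s = (if u = 0 then 1 else u / cmod u)"
  define t where "t = sqrt (M\<^sup>2 - (cmod u)\<^sup>2)"
  have s: "cmod s = 1" "u = s * cmod u"
    unfolding s_def by (simp_all add: norm_divide)
  have M: "0 \<le> M"
    using assms norm_ge_zero order_trans by blast
  have "t\<^sup>2 = M\<^sup>2 - (cmod u)\<^sup>2"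
    unfolding t_def using assms norm_ge_zero[of u] by (simp add: power_mono)
  then have "cmod (cmod u + \<i> * t) = M" "cmod (cmod u - \<i> * t) = M"
    using M by (simp_all add: cmod_def)
  then have "cmod (s * (cmod u + \<i> * t)) = M" "cmod (s * (cmod u - \<i> * t)) = M"
    by (simp_all only: norm_mult s(1) mult_1)
  moreover have "u = (s * (cmod u + \<i> * t) + s * (cmod u - \<i> * t)) / 2"
    by (subst s(2)) (simp add: algebra_simps)
  ultimately show thesis by (rule that)
qed

text \<open>Each multiplier is the midpoint of two multipliers of modulus exactly \<open>M\<close>, and those do
  not change the norm of \<open>M x\<close>.\<close>
lemma absolute_vnorm_mult_le:
  assumes "is_absolute_vnorm I N" "x \<in> vecs I" "0 \<le> M" "\<And>i. i \<in> I \<Longrightarrow> cmod (u i) \<le> M"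
  shows "N (\<lambda>i. u i * x i) \<le> M * N x"
proof -
  note vn = absolute_vnorm_imp_vnorm[OF assms(1)]
  have abs: "\<And>y z. y \<in> vecs I \<Longrightarrow> z \<in> vecs I \<Longrightarrow> (\<forall>i. cmod (y i) = cmod (z i)) \<Longrightarrow> N y = N z"
    using assms(1) unfolding is_absolute_vnorm_def by blast
  have "\<exists>w1 w2. cmod w1 = M \<and> cmod w2 = M \<and> (i \<in> I \<longrightarrow> u i = (w1 + w2) / 2)" for i
  proof (cases "i \<in> I")
    case True
    then show ?thesis
      using complex_midpoint_of_norm_eq[OF assms(4)[OF True]] by metis
  next
    case False
    then show ?thesis
      using assms(3) by (intro exI[of _ "complex_of_real M"]) simp
  qed
  then obtain w1 w2 where w: "\<And>i. cmod (w1 i) = M" "\<And>i. cmod (w2 i) = M"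
      "\<And>i. i \<in> I \<Longrightarrow> u i = (w1 i + w2 i) / 2"
    by metis
  define y1 where "y1 i = w1 i * x i" for i
  define y2 where "y2 i = w2 i * x i" for i
  have y: "y1 \<in> vecs I" "y2 \<in> vecs I" "(\<lambda>i. complex_of_real M * x i) \<in> vecs I"
    unfolding y1_def y2_def using assms(2) by auto
  have "N (\<lambda>i. complex_of_real M * x i) = M * N x"
    using vnorm_scale[OF vn assms(2)] assms(3) by simp
  then have Ny: "N y1 = M * N x" "N y2 = M * N x"
    using abs[OF y(1,3)] abs[OF y(2,3)] w(1,2) assms(3) unfolding y1_def y2_def
    by (simp_all add: norm_mult)
  have "(\<lambda>i. u i * x i) = (\<lambda>i. (1/2) * (y1 i + y2 i))"
  proof
    fix i
    show "u i * x i = (1/2) * (y1 i + y2 i)"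
    proof (cases "i \<in> I")
      case True
      then show ?thesis unfolding w(3)[OF True] y1_def y2_def by (simp add: algebra_simps)
    qed (use assms(2) in \<open>simp add: vecs_def y1_def y2_def\<close>)
  qed
  then have "N (\<lambda>i. u i * x i) = (N (\<lambda>i. y1 i + y2 i)) / 2"
    using vnorm_scale[OF vn vecs_add[OF y(1,2)], of "1/2"] by simp
  also have "\<dots> \<le> (N y1 + N y2) / 2"
    using vnorm_triangle[OF vn y(1,2)] by simp
  also have "\<dots> = M * N x"
    using Ny by simp
  finally show ?thesis by simp
qed

lemma matvec_vecs [intro]: "matvec I A x \<in> vecs I"
  unfolding matvec_def vecs_def by auto

lemma absolute_vnorm_matvec_le:
  assumes "is_absolute_vnorm I N" "finite I"
  obtains K where "\<And>A M x. 0 \<le> M \<Longrightarrow> (\<And>i j. i \<in> I \<Longrightarrow> j \<in> I \<Longrightarrow> cmod (A i j) \<le> M) \<Longrightarrow>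
    x \<in> vecs I \<Longrightarrow> N (matvec I A x) \<le> M * K * N x"
proof -
  note vn = absolute_vnorm_imp_vnorm[OF assms(1)]
  define e :: "'a \<Rightarrow> 'a \<Rightarrow> complex" where "e j = (\<lambda>i. if i = j then 1 else 0)" for j
  define one where "one = (\<lambda>i. if i \<in> I then 1 else 0 :: complex)"
  have e: "e j \<in> vecs I" "0 < N (e j)" if "j \<in> I" for j
    using basis_vector_vecs[OF that] vnorm_pos[OF vn] unfolding e_def by auto
  have one: "one \<in> vecs I"
    unfolding one_def vecs_def by simp
  have "N (matvec I A x) \<le> M * (N one * (\<Sum>j\<in>I. 1 / N (e j))) * N x"
    if M: "0 \<le> M" "\<And>i j. i \<in> I \<Longrightarrow> j \<in> I \<Longrightarrow> cmod (A i j) \<le> M" and x: "x \<in> vecs I" for A M x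
  proof -
    have coord: "cmod (x j) \<le> N x / N (e j)" if j: "j \<in> I" for j
    proof -
      have "cmod (x j) * N (e j) = N (\<lambda>i. x j * e j i)"
        using vnorm_scale[OF vn e(1)[OF j]] by simp
      also have "(\<lambda>i. x j * e j i) = (\<lambda>i. e j i * x i)"
        unfolding e_def by auto
      also have "N \<dots> \<le> 1 * N x"
        by (rule absolute_vnorm_mult_le[OF assms(1) x]) (simp_all add: e_def)
      finally show ?thesis
        using e(2)[OF j] by (simp add: le_divide_eq)
    qed
    have "matvec I A x = (\<lambda>i. \<Sum>j\<in>I. (A i j * x j) * one i)"
      unfolding matvec_def one_def by auto
    then have "N (matvec I A x) \<le> (\<Sum>j\<in>I. N (\<lambda>i. (A i j * x j) * one i))"
      using vnorm_sum_le[OF vn assms(2), of "\<lambda>j i. (A i j * x j) * one i"] vecs_mult[OF one]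
      by simp
    also have "\<dots> \<le> (\<Sum>j\<in>I. M * (N x / N (e j)) * N one)"
    proof (rule sum_mono)
      fix j assume j: "j \<in> I"
      have "N (\<lambda>i. (A i j * x j) * one i) \<le> (M * cmod (x j)) * N one"
        using M j by (intro absolute_vnorm_mult_le[OF assms(1) one]) (auto simp: norm_mult mult_right_mono)
      also have "\<dots> \<le> M * (N x / N (e j)) * N one"
        using M coord[OF j] vnorm_nonneg[OF vn one] by (intro mult_right_mono mult_left_mono)
      finally show "N (\<lambda>i. (A i j * x j) * one i) \<le> M * (N x / N (e j)) * N one" .
    qed
    also have "\<dots> = M * (N one * (\<Sum>j\<in>I. 1 / N (e j))) * N x"
      by (simp add: sum_distrib_left sum_distrib_right ac_simps)
    finally show ?thesis .
  qed
  then show thesis by (rule that)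
qed

lemma opnorm_ratios_bdd_above:
  assumes "is_absolute_vnorm I N" "finite I"
  shows "bdd_above {N (matvec I A x) / N x | x. x \<in> vecs I \<and> x \<noteq> (\<lambda>_. 0)}"
proof -
  note vn = absolute_vnorm_imp_vnorm[OF assms(1)]
  obtain K where K: "\<And>A M x. 0 \<le> M \<Longrightarrow> (\<And>i j. i \<in> I \<Longrightarrow> j \<in> I \<Longrightarrow> cmod (A i j) \<le> M) \<Longrightarrow>
      x \<in> vecs I \<Longrightarrow> N (matvec I A x) \<le> M * K * N x"
    using absolute_vnorm_matvec_le[OF assms] by blast
  define M where "M = (\<Sum>i\<in>I. \<Sum>j\<in>I. cmod (A i j))"
  have M: "0 \<le> M" "cmod (A i j) \<le> M" if "i \<in> I" "j \<in> I" for i j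
  proof -
    have "cmod (A i j) \<le> (\<Sum>j\<in>I. cmod (A i j))"
      using that assms(2) by (intro member_le_sum) auto
    also have "\<dots> \<le> M"
      unfolding M_def using that assms(2) by (intro member_le_sum sum_nonneg) auto
    finally show "cmod (A i j) \<le> M" .
  qed (simp add: M_def sum_nonneg)
  show ?thesis
  proof (rule bdd_aboveI)
    fix y assume "y \<in> {N (matvec I A x) / N x | x. x \<in> vecs I \<and> x \<noteq> (\<lambda>_. 0)}"
    then obtain x where x: "x \<in> vecs I" "x \<noteq> (\<lambda>_. 0)" "y = N (matvec I A x) / N x"
      by blast
    moreover have "I \<noteq> {}"
      using x(1,2) unfolding vecs_def by auto
    ultimately show "y \<le> M * K"
      using K[of M A x] M vnorm_pos[OF vn x(1,2)] by (auto simp: divide_le_eq)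
  qed
qed

lemma opnorm_mult_le:
  assumes "is_absolute_vnorm I N" "finite I" "x \<in> vecs I"
  shows "N (matvec I A x) \<le> opnorm I N A * N x"
proof -
  note vn = absolute_vnorm_imp_vnorm[OF assms(1)]
  show ?thesis
  proof (cases "x = (\<lambda>_. 0)")
    case True
    then show ?thesis
      using vnorm_zero[OF vn] by (simp add: matvec_def if_cong)
  next
    case False
    have "N (matvec I A x) / N x \<le> opnorm I N A"
      unfolding opnorm_def using assms(3) False
      by (intro cSup_upper opnorm_ratios_bdd_above[OF assms(1,2)]) auto
    then show ?thesis
      using vnorm_pos[OF vn assms(3) False] by (simp add: divide_le_eq)
  qed
qed

lemma opnorm_least:
  assumes "is_vnorm I N" "I \<noteq> {}" "\<And>x. x \<in> vecs I \<Longrightarrow> N (matvec I A x) \<le> K * N x"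
  shows "opnorm I N A \<le> K"
  unfolding opnorm_def
proof (rule cSup_least)
  obtain i where "i \<in> I"
    using assms(2) by blast
  from basis_vector_vecs[OF this] show "{N (matvec I A x) / N x | x. x \<in> vecs I \<and> x \<noteq> (\<lambda>_. 0)} \<noteq> {}"
    by blast
next
  fix y assume "y \<in> {N (matvec I A x) / N x | x. x \<in> vecs I \<and> x \<noteq> (\<lambda>_. 0)}"
  then obtain x where x: "x \<in> vecs I" "x \<noteq> (\<lambda>_. 0)" "y = N (matvec I A x) / N x"
    by blast
  then show "y \<le> K"
    using assms(3)[OF x(1)] vnorm_pos[OF assms(1) x(1,2)] by (simp add: divide_le_eq)
qed

lemma opnorm_nonneg:
  assumes "is_absolute_vnorm I N" "finite I" "I \<noteq> {}"
  shows "0 \<le> opnorm I N A"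
proof -
  note vn = absolute_vnorm_imp_vnorm[OF assms(1)]
  obtain i where "i \<in> I"
    using assms(3) by blast
  note x = basis_vector_vecs[OF this]
  have "0 \<le> opnorm I N A * N (\<lambda>j. if j = i then 1 else 0)"
    using vnorm_nonneg[OF vn matvec_vecs] opnorm_mult_le[OF assms(1,2) x(1)] order_trans by blast
  then show ?thesis
    using vnorm_pos[OF vn x] by (simp add: zero_le_mult_iff)
qed

lemma opnorm_le_entrywise:
  assumes "is_absolute_vnorm I N" "finite I" "I \<noteq> {}"
  obtains K where "\<And>A M. 0 \<le> M \<Longrightarrow> (\<And>i j. i \<in> I \<Longrightarrow> j \<in> I \<Longrightarrow> cmod (A i j) \<le> M) \<Longrightarrow>
    opnorm I N A \<le> M * K"
proof -
  obtain K where K: "\<And>A M x. 0 \<le> M \<Longrightarrow> (\<And>i j. i \<in> I \<Longrightarrow> j \<in> I \<Longrightarrow> cmod (A i j) \<le> M) \<Longrightarrow>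
      x \<in> vecs I \<Longrightarrow> N (matvec I A x) \<le> M * K * N x"
    using absolute_vnorm_matvec_le[OF assms(1,2)] by blast
  note vn = absolute_vnorm_imp_vnorm[OF assms(1)]
  show thesis
    by (rule that, rule opnorm_least[OF vn assms(3)], rule K)
qed

lemma opnorm_mult_columns_le:
  assumes "is_absolute_vnorm I N" "finite I" "I \<noteq> {}" "\<And>j. j \<in> I \<Longrightarrow> cmod (u j) \<le> M"
  shows "opnorm I N (\<lambda>i j. A i j * u j) \<le> M * opnorm I N A"
proof -
  note vn = absolute_vnorm_imp_vnorm[OF assms(1)]
  have M: "0 \<le> M"
    using assms(3,4) norm_ge_zero order_trans by blast
  show ?thesis
  proof (rule opnorm_least[OF vn assms(3)])
    fix x assume x: "x \<in> vecs I"
    have "matvec I (\<lambda>i j. A i j * u j) x = matvec I A (\<lambda>j. u j * x j)"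
      unfolding matvec_def by (intro ext if_cong refl sum.cong) (simp add: ac_simps)
    then have "N (matvec I (\<lambda>i j. A i j * u j) x) = N (matvec I A (\<lambda>j. u j * x j))"
      by simp
    also have "\<dots> \<le> opnorm I N A * N (\<lambda>j. u j * x j)"
      using x by (intro opnorm_mult_le[OF assms(1,2)]) auto
    also have "\<dots> \<le> opnorm I N A * (M * N x)"
      using absolute_vnorm_mult_le[OF assms(1) x M assms(4)] opnorm_nonneg[OF assms(1-3)]
      by (rule mult_left_mono)
    finally show "N (matvec I (\<lambda>i j. A i j * u j) x) \<le> M * opnorm I N A * N x"
      by (simp add: ac_simps)
  qed
qed

lemma lp_norm_nonneg: "0 \<le> lp_norm n p x"
  unfolding lp_norm_def by simp

lemma lp_norm_scale:
  assumes "0 < p"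
  shows "lp_norm n p (\<lambda>i. c * x i) = cmod c * lp_norm n p x"
proof -
  have "(\<Sum>i<n. cmod (c * x i) powr p) = cmod c powr p * (\<Sum>i<n. cmod (x i) powr p)"
    by (simp add: norm_mult powr_mult sum_distrib_left)
  then show ?thesis
    unfolding lp_norm_def using assms by (simp add: powr_mult powr_powr sum_nonneg)
qed

lemma lp_norm_eq_0_iff:
  assumes "0 < p"
  shows "lp_norm n p x = 0 \<longleftrightarrow> (\<forall>i<n. x i = 0)"
  unfolding lp_norm_def using assms by (auto simp: sum_nonneg_eq_0_iff)

lemma norm_le_lp_norm:
  assumes "0 < p" "i < n"
  shows "cmod (x i) \<le> lp_norm n p x"
proof -
  have "cmod (x i) = (cmod (x i) powr p) powr (1 / p)"
    using assms(1) by (simp add: powr_powr)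
  also have "\<dots> \<le> lp_norm n p x"
    unfolding lp_norm_def using assms by (intro powr_mono2 member_le_sum) auto
  finally show ?thesis .
qed

lemma sum_powr_eq_1_if_lp_norm_eq_1:
  assumes "0 < p" "lp_norm n p x = 1"
  shows "(\<Sum>i<n. cmod (x i) powr p) = 1"
proof -
  have "(\<Sum>i<n. cmod (x i) powr p) = ((\<Sum>i<n. cmod (x i) powr p) powr (1 / p)) powr p"
    using assms(1) by (simp add: powr_powr sum_nonneg)
  then show ?thesis
    using assms(2) unfolding lp_norm_def by simp
qed

text \<open>The case \<open>r < p\<close> is the power mean inequality; with \<open>q = r / p\<close>, Young's inequality gives
  \<open>(n |x i|^p)^q \<le> q n |x i|^p + (1 - q)\<close>, which sums to \<open>n^q \<Sum> |x i|^r \<le> n\<close>.\<close>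
lemma lp_norm_le_if_lp_norm_eq_1:
  assumes "0 < p" "0 < r" "lp_norm n p x = 1"
  shows "lp_norm n r x \<le> real n powr max (1 / r - 1 / p) 0"
proof -
  have sum_p: "(\<Sum>i<n. cmod (x i) powr p) = 1"
    by (rule sum_powr_eq_1_if_lp_norm_eq_1[OF assms(1,3)])
  then have n: "0 < real n"
    by (cases n) auto
  show ?thesis
  proof (cases "p \<le> r")
    case True
    have "(\<Sum>i<n. cmod (x i) powr r) \<le> (\<Sum>i<n. cmod (x i) powr p)"
    proof (rule sum_mono)
      fix i assume "i \<in> {..<n}"
      then have "cmod (x i) \<le> 1"
        using norm_le_lp_norm[OF assms(1), of i n x] assms(3) by simp
      then show "cmod (x i) powr r \<le> cmod (x i) powr p"
        using True by (cases "x i = 0") (auto intro: powr_mono')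
    qed
    then have "lp_norm n r x \<le> 1 powr (1 / r)"
      unfolding lp_norm_def using assms(2) sum_p by (intro powr_mono2) (auto intro: sum_nonneg)
    moreover have "max (1 / r - 1 / p) 0 = 0"
      using True assms(1) by (simp add: frac_le)
    ultimately show ?thesis
      using n by simp
  next
    case False
    define q where "q = r / p"
    have q: "0 < q" "q < 1"
      using False assms(1,2) unfolding q_def by auto
    have Young: "real n powr q * cmod (x i) powr r \<le> q * (real n * cmod (x i) powr p) + (1 - q)" for i
    proof (cases "x i = 0")
      case False
      have "(real n * cmod (x i) powr p) powr q * 1 powr (1 - q) \<le> q * (real n * cmod (x i) powr p) + (1 - q) * 1"
        using q n False by (intro Youngs_inequality_0) auto
      moreover have "(real n * cmod (x i) powr p) powr q = real n powr q * cmod (x i) powr r"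
        using assms(1) by (simp add: powr_mult powr_powr q_def)
      ultimately show ?thesis
        by simp
    qed (use q assms(2) in simp)
    have "real n powr q * (\<Sum>i<n. cmod (x i) powr r) \<le> (\<Sum>i<n. q * (real n * cmod (x i) powr p) + (1 - q))"
      unfolding sum_distrib_left by (intro sum_mono Young)
    also have "\<dots> = real n"
      using sum_p by (simp add: sum.distrib flip: sum_distrib_left) (simp add: algebra_simps)
    finally have "(\<Sum>i<n. cmod (x i) powr r) \<le> real n powr (1 - q)"
      using n by (simp add: powr_diff le_divide_eq mult.commute)
    then have "lp_norm n r x \<le> (real n powr (1 - q)) powr (1 / r)"
      unfolding lp_norm_def using assms(2) by (intro powr_mono2) (auto intro: sum_nonneg)
    also have "\<dots> = real n powr max (1 / r - 1 / p) 0"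
      using False assms(1,2) unfolding q_def by (auto simp: powr_powr field_simps max_def)
    finally show ?thesis .
  qed
qed

lemma lp_norm_le_lp_norm:
  assumes "0 < p" "0 < r"
  shows "lp_norm n r x \<le> real n powr max (1 / r - 1 / p) 0 * lp_norm n p x"
proof (cases "lp_norm n p x = 0")
  case True
  then have "lp_norm n r x = 0"
    using lp_norm_eq_0_iff assms by blast
  then show ?thesis
    using lp_norm_nonneg by simp
next
  case False
  define t where "t = lp_norm n p x"
  have t: "0 < t"
    using False lp_norm_nonneg unfolding t_def by (simp add: order_less_le)
  have "lp_norm n p (\<lambda>i. (1 / t) * x i) = 1"
    using t lp_norm_scale[OF assms(1), of n "1 / t" x] by (simp add: t_def norm_divide)
  then have "lp_norm n r (\<lambda>i. (1 / t) * x i) \<le> real n powr max (1 / r - 1 / p) 0"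
    by (rule lp_norm_le_if_lp_norm_eq_1[OF assms])
  then show ?thesis
    using t lp_norm_scale[OF assms(2), of n "1 / t" x] by (simp add: t_def norm_divide divide_le_eq mult.commute)
qed

lemma lp_norm_col_identity:
  assumes "0 < p" "j < n"
  shows "lp_norm n p (col n (\<lambda>i j. if i = j then 1 else 0) j) = 1"
proof -
  have "(\<Sum>i<n. cmod (col n (\<lambda>i j. if i = j then 1 else 0) j i) powr p) = (\<Sum>i<n. if i = j then 1 else 0)"
    using assms(1) by (intro sum.cong) (auto simp: col_def)
  then show ?thesis
    using assms(2) unfolding lp_norm_def by simp
qed

lemma ksubsets_finite: "finite (ksubsets n k)"
  by (rule finite_subset[of _ "Pow {..<n}"]) (auto simp: ksubsets_def)

lemma ksubsets_nonempty: "k \<le> n \<Longrightarrow> ksubsets n k \<noteq> {}"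
  unfolding ksubsets_def by (auto intro!: exI[of _ "{..<k}"])

lemma sorted_list_of_set_nth_mem:
  "finite S \<Longrightarrow> card S = k \<Longrightarrow> i < k \<Longrightarrow> sorted_list_of_set S ! i \<in> S"
  by (metis length_sorted_list_of_set nth_mem set_sorted_list_of_set)

lemma prod_sorted_list_of_set_nth:
  assumes "finite S" "card S = k"
  shows "(\<Prod>i<k. d (sorted_list_of_set S ! i)) = (\<Prod>j\<in>S. d j)"
proof -
  have "bij_betw ((!) (sorted_list_of_set S)) {..<k} S"
    using assms by (intro bij_betw_nth) auto
  then show ?thesis
    by (simp add: prod.reindex_bij_betw)
qed

lemma minor_mult_columns:
  "minor k (\<lambda>i j. B i j * d j) A S = minor k B A S * (\<Prod>i<k. d (sorted_list_of_set S ! i))"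
proof -
  let ?a = "sorted_list_of_set A" and ?s = "sorted_list_of_set S"
  have "(\<Prod>i<k. B (?a ! i) (?s ! \<sigma> i) * d (?s ! \<sigma> i)) =
      (\<Prod>i<k. B (?a ! i) (?s ! \<sigma> i)) * (\<Prod>i<k. d (?s ! i))" if "\<sigma> permutes {..<k}" for \<sigma>
    using prod.permute[OF that, of "\<lambda>i. d (?s ! i)"] by (simp add: prod.distrib comp_def)
  then show ?thesis
    unfolding minor_def sum_distrib_right by (intro sum.cong) (simp_all add: mult.assoc)
qed

lemma norm_minor_le:
  assumes "finite A" "card A = k" "finite S" "card S = k"
    and "\<And>i j. i \<in> A \<Longrightarrow> j \<in> S \<Longrightarrow> cmod (B i j) \<le> M"
  shows "cmod (minor k B A S) \<le> fact k * M ^ k"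
proof -
  let ?a = "sorted_list_of_set A" and ?s = "sorted_list_of_set S"
  have "cmod (of_int (sign \<sigma>) * (\<Prod>i<k. B (?a ! i) (?s ! \<sigma> i))) \<le> M ^ k"
    if \<sigma>: "\<sigma> permutes {..<k}" for \<sigma>
  proof -
    have "(\<Prod>i<k. cmod (B (?a ! i) (?s ! \<sigma> i))) \<le> (\<Prod>i<k. M)"
      using permutes_in_image[OF \<sigma>] assms
      by (intro prod_mono) (auto intro!: assms(5) sorted_list_of_set_nth_mem)
    then show ?thesis
      by (simp add: norm_mult sign_def prod_norm)
  qed
  then have "cmod (minor k B A S) \<le> (\<Sum>\<sigma> | \<sigma> permutes {..<k}. M ^ k)"
    unfolding minor_def by (intro order_trans[OF norm_sum] sum_mono) auto
  then show ?thesis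
    by (simp add: card_permutations)
qed

text \<open>Since \<open>theta\<close> is a supremum of reals, it is only meaningful on a bounded set.\<close>
lemma bdd_above_opnorm_compound_lp_unit_columns:
  assumes "is_absolute_vnorm (ksubsets n k) N" "k \<le> n" "0 < r"
  shows "bdd_above {opnorm (ksubsets n k) N (compound k B) | B. \<forall>j<n. lp_norm n r (col n B j) = 1}"
proof -
  obtain K where K: "\<And>A M. 0 \<le> M \<Longrightarrow>
      (\<And>R S. R \<in> ksubsets n k \<Longrightarrow> S \<in> ksubsets n k \<Longrightarrow> cmod (A R S) \<le> M) \<Longrightarrow>
      opnorm (ksubsets n k) N A \<le> M * K"
    using opnorm_le_entrywise[OF assms(1) ksubsets_finite ksubsets_nonempty[OF assms(2)]] by blast
  have "opnorm (ksubsets n k) N (compound k B) \<le> fact k * K"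
    if B: "\<forall>j<n. lp_norm n r (col n B j) = 1" for B
  proof -
    have "cmod (B i j) \<le> 1" if "i < n" "j < n" for i j
      using norm_le_lp_norm[OF assms(3) that(1), of "col n B j"] B that by (simp add: col_def)
    then have "cmod (compound k B R S) \<le> fact k * 1 ^ k"
      if "R \<in> ksubsets n k" "S \<in> ksubsets n k" for R S
      using that unfolding compound_def ksubsets_def
      by (intro norm_minor_le) (auto intro: finite_subset)
    then show ?thesis
      using K[of "fact k"] by simp
  qed
  then show ?thesis
    by (intro bdd_aboveI) blast
qed

lemma lp_unit_columns_rescale:
  assumes "0 < p" "0 < r" "\<forall>j<n. lp_norm n p (col n B j) = 1"
  obtains B' d where "\<forall>j<n. lp_norm n r (col n B' j) = 1" "B = (\<lambda>i j. B' i j * of_real (d j))"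
    "\<And>j. 0 < d j" "\<And>j. j < n \<Longrightarrow> d j \<le> real n powr max (1 / r - 1 / p) 0"
proof
  define d where "d j = (if j < n then lp_norm n r (col n B j) else 1)" for j
  show d_pos: "0 < d j" for j
    using assms lp_norm_nonneg[of n r] lp_norm_eq_0_iff[OF assms(1), of n "col n B j"]
      lp_norm_eq_0_iff[OF assms(2), of n "col n B j"]
    unfolding d_def by (auto simp: order_less_le)
  show "d j \<le> real n powr max (1 / r - 1 / p) 0" if "j < n" for j
    using lp_norm_le_lp_norm[OF assms(1,2), of n "col n B j"] assms(3) that unfolding d_def by simp
  show "B = (\<lambda>i j. B i j / of_real (d j) * of_real (d j))"
  proof (intro ext)
    fix i j
    have "complex_of_real (d j) \<noteq> 0"
      using d_pos[of j] by simp
    then show "B i j = B i j / of_real (d j) * of_real (d j)"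
      by simp
  qed
  show "\<forall>j<n. lp_norm n r (col n (\<lambda>i j. B i j / of_real (d j)) j) = 1"
  proof (intro allI impI)
    fix j assume "j < n"
    have "col n (\<lambda>i j. B i j / of_real (d j)) j = (\<lambda>i. of_real (1 / d j) * col n B j i)"
      unfolding col_def by auto
    then have "lp_norm n r (col n (\<lambda>i j. B i j / of_real (d j)) j)
        = lp_norm n r (\<lambda>i. of_real (1 / d j) * col n B j i)"
      by simp
    also have "\<dots> = 1 / d j * d j"
      unfolding lp_norm_scale[OF assms(2)] using d_pos[of j] \<open>j < n\<close> by (simp add: d_def norm_divide)
    finally show "lp_norm n r (col n (\<lambda>i j. B i j / of_real (d j)) j) = 1"
      using d_pos[of j] by simp
  qed
qed

lemma opnorm_compound_lp_rescale:
  assumes "is_absolute_vnorm (ksubsets n k) N" "k \<le> n" "0 < p" "0 < r"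
    and "\<forall>j<n. lp_norm n p (col n B j) = 1"
  shows "\<exists>B'. (\<forall>j<n. lp_norm n r (col n B' j) = 1) \<and> opnorm (ksubsets n k) N (compound k B)
    \<le> (real n powr max (1 / r - 1 / p) 0) ^ k * opnorm (ksubsets n k) N (compound k B')"
proof -
  obtain B' d where B': "\<forall>j<n. lp_norm n r (col n B' j) = 1" "B = (\<lambda>i j. B' i j * of_real (d j))"
    and d: "\<And>j. 0 < d j" "\<And>j. j < n \<Longrightarrow> d j \<le> real n powr max (1 / r - 1 / p) 0"
    using lp_unit_columns_rescale[OF assms(3-5)] by blast
  \<comment> \<open>A product over the sorted list rather than over \<open>S\<close>, so that \<open>compound_eq\<close> holds for every \<open>S\<close>.\<close>
  define u where "u S = (\<Prod>i<k. complex_of_real (d (sorted_list_of_set S ! i)))" for S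
  have compound_eq: "compound k B = (\<lambda>R S. compound k B' R S * u S)"
    unfolding B'(2) compound_def u_def by (intro ext) (rule minor_mult_columns)
  have u_le: "cmod (u S) \<le> (real n powr max (1 / r - 1 / p) 0) ^ k" if S: "S \<in> ksubsets n k" for S
  proof -
    have fin: "finite S" "card S = k" "S \<subseteq> {..<n}"
      using S unfolding ksubsets_def by (auto intro: finite_subset)
    have "cmod (u S) = (\<Prod>i<k. d (sorted_list_of_set S ! i))"
      unfolding u_def using d(1) by (simp add: prod_norm[symmetric] less_imp_le)
    also have "\<dots> = (\<Prod>j\<in>S. d j)"
      by (rule prod_sorted_list_of_set_nth[OF fin(1,2)])
    also have "\<dots> \<le> (\<Prod>j\<in>S. real n powr max (1 / r - 1 / p) 0)"
      using fin d by (intro prod_mono) (auto intro: less_imp_le)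
    finally show ?thesis
      using fin by simp
  qed
  have "opnorm (ksubsets n k) N (\<lambda>R S. compound k B' R S * u S)
      \<le> (real n powr max (1 / r - 1 / p) 0) ^ k * opnorm (ksubsets n k) N (compound k B')"
    using u_le by (rule opnorm_mult_columns_le[OF assms(1) ksubsets_finite ksubsets_nonempty[OF assms(2)]])
  then show ?thesis
    using B'(1) compound_eq by auto
qed

lemma theta_le_if_rescale:
  assumes "bdd_above {\<mu> (compound k B) | B. \<forall>j<n. \<nu>' (col n B j) = 1}"
    and "\<exists>B. \<forall>j<n. \<nu> (col n B j) = 1"
    and "\<And>B. \<forall>j<n. \<nu> (col n B j) = 1 \<Longrightarrow>
      \<exists>B'. (\<forall>j<n. \<nu>' (col n B' j) = 1) \<and> \<mu> (compound k B) \<le> c * \<mu> (compound k B')"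
    and "0 \<le> c"
  shows "theta n k \<mu> \<nu> \<le> c * theta n k \<mu> \<nu>'"
  unfolding theta_def
proof (rule cSup_least)
  show "{\<mu> (compound k B) | B. \<forall>j<n. \<nu> (col n B j) = 1} \<noteq> {}"
    using assms(2) by blast
next
  fix y assume "y \<in> {\<mu> (compound k B) | B. \<forall>j<n. \<nu> (col n B j) = 1}"
  then obtain B B' where "y \<le> c * \<mu> (compound k B')" "\<forall>j<n. \<nu>' (col n B' j) = 1"
    using assms(3) by blast
  moreover have "\<mu> (compound k B') \<le> Sup {\<mu> (compound k B) | B. \<forall>j<n. \<nu>' (col n B j) = 1}"
    if "\<forall>j<n. \<nu>' (col n B' j) = 1" for B'
    using that by (intro cSup_upper assms(1)) blast
  ultimately show "y \<le> c * Sup {\<mu> (compound k B) | B. \<forall>j<n. \<nu>' (col n B j) = 1}"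
    using assms(4) by (meson mult_left_mono order_trans)
qed

theorem lemma2p12:
  fixes n k p r :: nat and N :: "(nat set \<Rightarrow> complex) \<Rightarrow> real"
  assumes "0 < k" "k \<le> n" "0 < p" "0 < r"
    and "is_absolute_vnorm (ksubsets n k) N"
  shows "theta n k (opnorm (ksubsets n k) N) (lp_norm n (real p))
         \<le> real n powr (max (real k / real r - real k / real p) 0)
           * theta n k (opnorm (ksubsets n k) N) (lp_norm n (real r))"
proof -
  define e where "e = max (1 / real r - 1 / real p) 0"
  have "real k * e = max (real k / real r - real k / real p) 0"
    unfolding e_def by (simp add: max_mult_distrib_left right_diff_distrib)
  moreover have "(real n powr e) ^ k = (real n powr e) powr real k"
    using assms(1,2) by (simp add: powr_realpow)
  ultimately have c: "real n powr (max (real k / real r - real k / real p) 0) = (real n powr e) ^ k"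
    by (simp add: powr_powr mult.commute)
  have "theta n k (opnorm (ksubsets n k) N) (lp_norm n (real p))
      \<le> (real n powr e) ^ k * theta n k (opnorm (ksubsets n k) N) (lp_norm n (real r))"
  proof (rule theta_le_if_rescale)
    show "bdd_above {opnorm (ksubsets n k) N (compound k B) | B. \<forall>j<n. lp_norm n (real r) (col n B j) = 1}"
      using bdd_above_opnorm_compound_lp_unit_columns assms by simp
    show "\<exists>B. \<forall>j<n. lp_norm n (real p) (col n B j) = 1"
      using lp_norm_col_identity assms(3) by (metis of_nat_0_less_iff)
    show "\<exists>B'. (\<forall>j<n. lp_norm n (real r) (col n B' j) = 1) \<and>
        opnorm (ksubsets n k) N (compound k B) \<le> (real n powr e) ^ k * opnorm (ksubsets n k) N (compound k B')"
      if "\<forall>j<n. lp_norm n (real p) (col n B j) = 1" for B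
      using opnorm_compound_lp_rescale[OF assms(5,2) _ _ that] assms(3,4) by (simp add: e_def)
  qed simp
  then show ?thesis
    unfolding c .
qed

end
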